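(* For every integer $k \geq 2$ there is a constant $\alpha_k$ with $2k-1 < \alpha_k < 2k - \tfrac{1}{2}$ such that the number of palstars of length $2n$ over a $k$-letter alphabet is $\Theta(\alpha_k^n)$ as $n \to \infty$.
   Context: Let $\Sigma_k$ be an alphabet with $k$ letters and let $P = \{ x x^R : x \in \Sigma_k^+\}$ be the set of nonempty even-length palindromes over $\Sigma_k$ (here $x^R$ is the reversal of $x$). A palstar is an element of $P^* = \bigcup_{i\ge 0} P^i$, i.e. a (possibly empty) concatenation of nonempty even-length palindromes. *)

theory Defs
  imports Main "HOL-Library.Landau_Symbols"
begin

definition even_pal :: "'a list \<Rightarrow> bool" where
  "even_pal p \<longleftrightarrow> (\<exists>x. x \<noteq> [] \<and> p = x @ rev x)"

definition palstar :: "'a list \<Rightarrow> bool" where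
  "palstar w \<longleftrightarrow> (\<exists>ps. (\<forall>p\<in>set ps. even_pal p) \<and> w = concat ps)"

definition palstar_count :: "nat \<Rightarrow> nat \<Rightarrow> nat" where
  "palstar_count k n = card {w :: nat list. length w = 2 * n \<and> set w \<subseteq> {..<k} \<and> palstar w}"

end

theory Submission
  imports Defs Complex_Main
begin

text \<open>Every nonempty palstar factors uniquely as a prime palstar (an even palindrome without a
  proper even-palindrome prefix) followed by a palstar.  Hence the number \<open>t n\<close> of palstars of
  length \<open>2n\<close> satisfies the renewal equation \<open>t n = (\<Sum>j=1..n. f j * t (n - j))\<close>, where
  \<open>f j\<close> counts the prime palstars of length \<open>2j\<close>.  The estimates
  \<open>k^j - (\<Sum>i=1..j div 2. k^(j-i)) \<le> f j \<le> k^j - k^(j-1)\<close> show that \<open>G s = (\<Sum>j. f j * s^j)\<close>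
  is below \<open>1\<close> at \<open>s = 1/(2k - 1/2)\<close> and above \<open>1\<close> at \<open>s = 1/(2k - 1)\<close>, so \<open>G \<sigma> = 1\<close> for some
  \<open>\<sigma>\<close> in between.  Then \<open>t n * \<sigma>^n\<close> is a renewal sequence for the probability distribution
  \<open>f j * \<sigma>^j\<close>, whose tails decay geometrically; such a sequence stays between two positive
  constants, so \<open>t n = \<Theta>(\<sigma>^-n)\<close>.\<close>

section \<open>Prime palstars\<close>

lemma even_pal_iff: "even_pal w \<longleftrightarrow> w \<noteq> [] \<and> even (length w) \<and> rev w = w"
proof
  assume "even_pal w"
  then show "w \<noteq> [] \<and> even (length w) \<and> rev w = w" unfolding even_pal_def by auto
next
  assume w: "w \<noteq> [] \<and> even (length w) \<and> rev w = w"
  define h where "h = length w div 2"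
  have len: "length w = 2 * h" using w h_def by auto
  have "drop h w = rev (take h w)"
    using w by (metis drop_rev len mult_2 add_diff_cancel_right')
  then have "w = take h w @ rev (take h w)" by (metis append_take_drop_id)
  moreover have "take h w \<noteq> []" using w len by (cases h) auto
  ultimately show "even_pal w" unfolding even_pal_def by blast
qed

lemma palstar_Nil: "palstar []"
  unfolding palstar_def by (rule exI[of _ "[]"]) simp

lemma even_pal_imp_palstar: "even_pal p \<Longrightarrow> palstar p"
  unfolding palstar_def by (rule exI[of _ "[p]"]) simp

lemma palstar_append: "palstar a \<Longrightarrow> palstar b \<Longrightarrow> palstar (a @ b)"
  unfolding palstar_def by (metis Un_iff concat_append set_append)

definition prime_pal :: "'a list \<Rightarrow> bool" where
  "prime_pal v \<longleftrightarrow> even_pal v \<and> (\<forall>u z. v = u @ z \<and> z \<noteq> [] \<longrightarrow> \<not> even_pal u)"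

lemma even_pal_has_prime_prefix: "even_pal p \<Longrightarrow> \<exists>u z. p = u @ z \<and> prime_pal u"
proof (induction "length p" arbitrary: p rule: less_induct)
  case less
  show ?case
  proof (cases "prime_pal p")
    case True
    then show ?thesis by blast
  next
    case False
    then obtain u z where "p = u @ z" "z \<noteq> []" "even_pal u"
      using less.prems prime_pal_def by blast
    with less.hyps[of u] show ?thesis by fastforce
  qed
qed

text \<open>Both lemmas below rest on the identity \<open>rev z @ u = u @ z\<close>, valid whenever
  \<open>u\<close> and \<open>u @ z\<close> are palindromes.\<close>
lemma prime_pal_prefix_le:
  assumes u: "prime_pal u" and p: "even_pal (u @ z)" and z: "z \<noteq> []"
  shows "length u \<le> length z"
proof (rule ccontr)
  assume "\<not> length u \<le> length z"
  then have lt: "length z < length u" by simp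
  have ru: "rev u = u" and eu: "even (length u)"
    using u by (auto simp: prime_pal_def even_pal_iff)
  have swap: "rev z @ u = u @ z" using p ru by (simp add: even_pal_iff)
  have ez: "even (length z)" using p eu by (simp add: even_pal_iff)
  define w where "w = drop (length z) u"
  have "take (length z) u = rev z"
    using arg_cong[OF swap, of "take (length z)"] lt by simp
  then have u_eq: "u = rev z @ w" unfolding w_def by (metis append_take_drop_id)
  then have u_eq': "u = w @ z" using swap by simp
  have "rev z @ rev w = rev z @ w" using ru u_eq u_eq' by (metis rev_append)
  then have "rev w = w" by simp
  moreover have "w \<noteq> []" "even (length w)" using lt eu ez unfolding w_def by auto
  ultimately have "even_pal w" by (simp add: even_pal_iff)
  then show False using u u_eq' z unfolding prime_pal_def by blast
qed

lemma prime_pal_prefix_factor: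
  assumes u: "prime_pal u" and p: "even_pal (u @ z)" and z: "z \<noteq> []"
  obtains m where "z = m @ u" "m = [] \<or> even_pal m"
proof -
  have le: "length u \<le> length z" using prime_pal_prefix_le[OF assms] .
  have ru: "rev u = u" and eu: "even (length u)"
    using u by (auto simp: prime_pal_def even_pal_iff)
  have swap: "rev z @ u = u @ z" using p ru by (simp add: even_pal_iff)
  have ez: "even (length z)" using p eu by (simp add: even_pal_iff)
  define m where "m = take (length z - length u) z"
  have "drop (length z - length u) z = u"
    using arg_cong[OF swap, of "drop (length z)"] le by simp
  then have z_eq: "z = m @ u" unfolding m_def by (metis append_take_drop_id)
  then have "u @ rev m @ u = u @ m @ u" using swap ru by simp
  then have "rev m = m" by simp
  moreover have "even (length m)" using z_eq eu ez by simp
  ultimately have "m = [] \<or> even_pal m" by (simp add: even_pal_iff)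
  with z_eq show thesis by (rule that)
qed

lemma palstar_prime_prefix:
  assumes "palstar w" "w \<noteq> []"
  obtains v y where "w = v @ y" "prime_pal v" "palstar y"
proof -
  obtain p ps where ps: "w = p @ concat ps" "even_pal p" "palstar (concat ps)"
    using assms unfolding palstar_def by (metis concat.simps list.set_intros neq_Nil_conv)
  obtain u z where uz: "p = u @ z" "prime_pal u"
    using even_pal_has_prime_prefix[OF ps(2)] by blast
  have "palstar z"
  proof (cases "z = []")
    case False
    then obtain m where "z = m @ u" "m = [] \<or> even_pal m"
      using prime_pal_prefix_factor uz ps(2) by metis
    then show ?thesis
      using uz(2) by (auto simp: prime_pal_def intro: palstar_append even_pal_imp_palstar)
  qed (simp add: palstar_Nil)
  then show thesis
    using that uz ps palstar_append by (metis append.assoc)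
qed

lemma prime_pal_prefix_unique:
  assumes "prime_pal v" "prime_pal v'" "v @ y = v' @ y'"
  shows "v = v'"
proof -
  from assms(3) obtain us where "v = v' @ us \<and> us @ y = y' \<or> v @ us = v' \<and> y = us @ y'"
    by (auto simp: append_eq_append_conv2)
  then show ?thesis using assms(1,2) unfolding prime_pal_def by (metis append.right_neutral)
qed


section \<open>Counting palstars\<close>

definition words :: "nat \<Rightarrow> nat \<Rightarrow> nat list set" where
  "words k n = {w. length w = n \<and> set w \<subseteq> {..<k}}"

lemma card_words: "card (words k n) = k ^ n"
  using card_lists_length_eq[of "{..<k}" n] unfolding words_def by (simp add: conj_commute)

lemma finite_words: "finite (words k n)"
  using finite_lists_length_eq[of "{..<k}" n] unfolding words_def by (simp add: conj_commute)

definition palstars :: "nat \<Rightarrow> nat \<Rightarrow> nat list set" where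
  "palstars k n = {w \<in> words k (2 * n). palstar w}"

definition prime_pals :: "nat \<Rightarrow> nat \<Rightarrow> nat list set" where
  "prime_pals k j = {v \<in> words k (2 * j). prime_pal v}"

lemma palstar_count_eq_card: "palstar_count k n = card (palstars k n)"
  unfolding palstar_count_def palstars_def words_def by simp

lemma palstars_0: "palstars k 0 = {[]}"
  by (auto simp: palstars_def words_def palstar_Nil)

lemma prime_pals_0: "prime_pals k 0 = {}"
  by (auto simp: prime_pals_def words_def prime_pal_def even_pal_def)

lemma palstars_nonempty: "0 < k \<Longrightarrow> palstars k n \<noteq> {}"
proof -
  assume "0 < k"
  have "palstar (concat (replicate n [0::nat, 0]))"
    unfolding palstar_def even_pal_def by (intro exI[of _ "replicate n [0, 0]"]) auto
  with \<open>0 < k\<close> have "concat (replicate n [0, 0]) \<in> palstars k n"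
    by (simp add: palstars_def words_def length_concat sum_list_replicate)
  then show ?thesis by blast
qed

lemma palstars_decompose:
  assumes "1 \<le> n"
  shows "palstars k n = (\<Union>j\<in>{1..n}. (\<lambda>(v, y). v @ y) ` (prime_pals k j \<times> palstars k (n - j)))"
    (is "_ = ?U")
proof
  show "palstars k n \<subseteq> ?U"
  proof
    fix w assume w: "w \<in> palstars k n"
    then have "palstar w" "w \<noteq> []" using assms by (auto simp: palstars_def words_def)
    then obtain v y where vy: "w = v @ y" "prime_pal v" "palstar y" by (rule palstar_prime_prefix)
    then have "even (length v)" and v: "v \<noteq> []" by (auto simp: prime_pal_def even_pal_iff)
    then obtain j where j: "length v = 2 * j" by (auto elim: evenE)
    with v have "1 \<le> j" by (cases j) auto
    have "v \<in> prime_pals k j" "y \<in> palstars k (n - j)" "j \<le> n"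
      using w vy j by (auto simp: palstars_def prime_pals_def words_def)
    with vy \<open>1 \<le> j\<close> show "w \<in> ?U" by force
  qed
  show "?U \<subseteq> palstars k n"
    by (auto simp: palstars_def prime_pals_def words_def prime_pal_def
        intro: palstar_append even_pal_imp_palstar)
qed

lemma card_palstars_renewal:
  assumes "1 \<le> n"
  shows "card (palstars k n) = (\<Sum>j=1..n. card (prime_pals k j) * card (palstars k (n - j)))"
proof -
  let ?cat = "\<lambda>(v :: nat list, y). v @ y"
  have inj: "inj_on ?cat (prime_pals k j \<times> Y)" for j Y
    by (rule inj_onI) (auto simp: prime_pals_def dest: prime_pal_prefix_unique)
  have disjoint: "?cat ` (prime_pals k i \<times> Y) \<inter> ?cat ` (prime_pals k j \<times> Y') = {}"
    if ij: "i \<noteq> j" for i j Y Y'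
  proof -
    have "v @ y \<noteq> v' @ y'" if "v \<in> prime_pals k i" "v' \<in> prime_pals k j" for v v' y y'
      using that ij prime_pal_prefix_unique[of v v' y y'] by (auto simp: prime_pals_def words_def)
    then show ?thesis by fastforce
  qed
  have finite: "finite (?cat ` (prime_pals k j \<times> palstars k (n - j)))" for j
    by (simp add: prime_pals_def palstars_def finite_words)
  have "card (palstars k n) = (\<Sum>j=1..n. card (?cat ` (prime_pals k j \<times> palstars k (n - j))))"
    unfolding palstars_decompose[OF assms] using disjoint finite by (intro card_UN_disjoint) auto
  also have "\<dots> = (\<Sum>j=1..n. card (prime_pals k j) * card (palstars k (n - j)))"
    by (simp add: card_image[OF inj] card_cartesian_product)
  finally show ?thesis .
qed

definition prime_pal_halves :: "nat \<Rightarrow> nat \<Rightarrow> nat list set" where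
  "prime_pal_halves k j = {x \<in> words k j. prime_pal (x @ rev x)}"

lemma card_prime_pals_eq_halves: "card (prime_pals k j) = card (prime_pal_halves k j)"
proof -
  have "prime_pals k j = (\<lambda>x. x @ rev x) ` prime_pal_halves k j"
  proof (intro equalityI subsetI)
    fix v assume v: "v \<in> prime_pals k j"
    then obtain x where "v = x @ rev x"
      by (auto simp: prime_pals_def prime_pal_def even_pal_def)
    with v show "v \<in> (\<lambda>x. x @ rev x) ` prime_pal_halves k j"
      by (auto simp: prime_pals_def prime_pal_halves_def words_def)
  qed (auto simp: prime_pals_def prime_pal_halves_def words_def)
  moreover have "inj_on (\<lambda>x. x @ rev x) (prime_pal_halves k j)"
    by (rule inj_onI) (auto simp: prime_pal_halves_def words_def)
  ultimately show ?thesis by (simp add: card_image)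
qed

lemma card_prime_pals_le: "card (prime_pals k j) \<le> k ^ j"
  unfolding card_prime_pals_eq_halves card_words[symmetric] prime_pal_halves_def
  by (intro card_mono finite_words) auto

text \<open>No half starting with a repeated letter \<open>a\<close> is counted: its square has the
  even-palindrome prefix \<open>[a, a]\<close>.\<close>
lemma card_prime_pals_upper:
  assumes "2 \<le> j"
  shows "card (prime_pals k j) + k ^ (j - 1) \<le> k ^ j"
proof -
  let ?D = "(\<lambda>y. hd y # y) ` words k (j - 1)"
  have D_sub: "?D \<subseteq> words k j"
  proof
    fix x assume "x \<in> ?D"
    then obtain y where y: "y \<in> words k (j - 1)" "x = hd y # y" by blast
    with assms obtain a r where "y = a # r" by (cases y) (auto simp: words_def)
    with y assms show "x \<in> words k j" by (auto simp: words_def)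
  qed
  have disjoint: "prime_pal_halves k j \<inter> ?D = {}"
  proof -
    have "hd y # y \<notin> prime_pal_halves k j" if y: "y \<in> words k (j - 1)" for y
    proof
      assume half: "hd y # y \<in> prime_pal_halves k j"
      obtain a r where "y = a # r" using y assms by (cases y) (auto simp: words_def)
      moreover have "even_pal [a, a]" unfolding even_pal_def by (rule exI[of _ "[a]"]) simp
      ultimately show False
        using half unfolding prime_pal_halves_def prime_pal_def by fastforce
    qed
    then show ?thesis by blast
  qed
  have card_D: "card ?D = k ^ (j - 1)"
    by (subst card_image) (auto intro: inj_onI simp: card_words)
  have "prime_pal_halves k j \<union> ?D \<subseteq> words k j"
    using D_sub by (auto simp: prime_pal_halves_def)
  then have "card (prime_pal_halves k j \<union> ?D) \<le> k ^ j"
    unfolding card_words[symmetric] by (intro card_mono finite_words)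
  moreover have "card (prime_pal_halves k j \<union> ?D) = card (prime_pal_halves k j) + card ?D"
    using disjoint by (intro card_Un_disjoint) (auto simp: prime_pal_halves_def finite_words)
  ultimately show ?thesis
    using card_D by (simp add: card_prime_pals_eq_halves)
qed

text \<open>A half \<open>x\<close> of length \<open>j\<close> whose square \<open>x @ rev x\<close> is not prime starts with
  \<open>w @ rev w\<close> for some \<open>1 \<le> length w \<le> j div 2\<close>; for each length \<open>i\<close> of \<open>w\<close> there are
  at most \<open>k ^ (j - i)\<close> such words.\<close>
definition pal_prefix_bound :: "nat \<Rightarrow> nat \<Rightarrow> nat" where
  "pal_prefix_bound k j = (\<Sum>i=1..j div 2. k ^ (j - i))"

lemma card_prime_pals_lower:
  assumes "1 \<le> j"
  shows "k ^ j \<le> card (prime_pals k j) + pal_prefix_bound k j"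
proof -
  let ?fold = "\<lambda>i y. take i y @ rev (take i y) @ drop i y"
  have cover: "words k j - prime_pal_halves k j \<subseteq> (\<Union>i\<in>{1..j div 2}. ?fold i ` words k (j - i))"
  proof
    fix x assume x: "x \<in> words k j - prime_pal_halves k j"
    then have len: "length x = j" and letters: "set x \<subseteq> {..<k}"
      and not_prime: "\<not> prime_pal (x @ rev x)"
      by (auto simp: words_def prime_pal_halves_def)
    have "x \<noteq> []" using len assms by auto
    then have p: "even_pal (x @ rev x)" unfolding even_pal_def by blast
    then obtain u z where uz: "x @ rev x = u @ z" "prime_pal u"
      using even_pal_has_prime_prefix by blast
    with not_prime have "z \<noteq> []" by auto
    with uz p have "length u \<le> length z" using prime_pal_prefix_le by metis
    moreover have "length u + length z = 2 * j" using arg_cong[OF uz(1), of length] len by simp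
    ultimately have lu: "length u \<le> j" by linarith
    obtain w where w: "u = w @ rev w" "w \<noteq> []"
      using uz(2) unfolding prime_pal_def even_pal_def by blast
    define i where "i = length w"
    have i: "1 \<le> i" "2 * i \<le> j" using w lu unfolding i_def by (auto simp: Suc_le_eq)
    have "take (2 * i) (x @ rev x) = u" using uz(1) w unfolding i_def by simp
    then have "take (2 * i) x = w @ rev w" using i len w by simp
    then have x_eq: "x = ?fold i (w @ drop (2 * i) x)"
      unfolding i_def by (metis append_take_drop_id append.assoc append_eq_conv_conj)
    have "set w \<subseteq> set x" using \<open>take (2 * i) x = w @ rev w\<close>
      by (metis Un_subset_iff set_append set_take_subset)
    then have "w @ drop (2 * i) x \<in> words k (j - i)"
      using len letters i set_drop_subset[of "2 * i" x] unfolding words_def i_def by auto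
    with x_eq i show "x \<in> (\<Union>i\<in>{1..j div 2}. ?fold i ` words k (j - i))" by fastforce
  qed
  have halves: "prime_pal_halves k j \<subseteq> words k j" by (auto simp: prime_pal_halves_def)
  have "k ^ j - card (prime_pal_halves k j) = card (words k j - prime_pal_halves k j)"
    using card_Diff_subset[OF finite_subset[OF halves finite_words] halves] by (simp add: card_words)
  also have "\<dots> \<le> card (\<Union>i\<in>{1..j div 2}. ?fold i ` words k (j - i))"
    using cover by (intro card_mono) (auto simp: finite_words)
  also have "\<dots> \<le> (\<Sum>i=1..j div 2. card (?fold i ` words k (j - i)))"
    by (rule card_UN_le) simp
  also have "\<dots> \<le> pal_prefix_bound k j"
    unfolding pal_prefix_bound_def
    by (intro sum_mono) (metis card_image_le card_words finite_words)
  finally show ?thesis by (simp add: card_prime_pals_eq_halves)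
qed

lemma pal_prefix_bound_0: "pal_prefix_bound k 0 = 0"
  by (simp add: pal_prefix_bound_def)

lemma pal_prefix_bound_Suc_Suc:
  "pal_prefix_bound k (Suc (Suc j)) = k ^ Suc j + k * pal_prefix_bound k j"
proof -
  have "pal_prefix_bound k (Suc (Suc j)) = (\<Sum>i=1..Suc (j div 2). k ^ (Suc (Suc j) - i))"
    by (simp add: pal_prefix_bound_def)
  also have "\<dots> = k ^ Suc j + (\<Sum>i=Suc 1..Suc (j div 2). k ^ (Suc (Suc j) - i))"
    by (subst sum.atLeast_Suc_atMost) auto
  also have "(\<Sum>i=Suc 1..Suc (j div 2). k ^ (Suc (Suc j) - i)) = (\<Sum>i=1..j div 2. k ^ (Suc j - i))"
    by (simp only: sum.shift_bounds_cl_Suc_ivl) simp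
  also have "(\<Sum>i=1..j div 2. k ^ (Suc j - i)) = (\<Sum>i=1..j div 2. k * k ^ (j - i))"
    by (intro sum.cong) (auto simp: Suc_diff_le)
  finally show ?thesis by (simp add: pal_prefix_bound_def sum_distrib_left)
qed

lemma pal_prefix_bound_le:
  assumes "2 \<le> k"
  shows "pal_prefix_bound k j \<le> k ^ j"
proof (induction j rule: nat_induct2)
  case (step j)
  have "k ^ Suc j + k * pal_prefix_bound k j \<le> k ^ Suc j + k * k ^ j"
    using step by simp
  also have "\<dots> = 2 * (k * k ^ j)" by simp
  also have "\<dots> \<le> k * (k * k ^ j)" using assms by (intro mult_right_mono) simp_all
  finally show ?case by (simp add: pal_prefix_bound_Suc_Suc numeral_2_eq_2)
qed (simp_all add: pal_prefix_bound_def)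


section \<open>The generating function of prime palstars\<close>

definition prime_pal_gf :: "nat \<Rightarrow> real \<Rightarrow> real" where
  "prime_pal_gf k s = (\<Sum>j. real (card (prime_pals k j)) * s ^ j)"

lemma summable_prime_pal_gf:
  fixes s :: real
  assumes "0 \<le> s" "k * s < 1"
  shows "summable (\<lambda>j. real (card (prime_pals k j)) * s ^ j)"
proof (rule summable_comparison_test)
  show "summable (\<lambda>j. (k * s) ^ j)" using assms by simp
  show "\<exists>N. \<forall>j\<ge>N. norm (real (card (prime_pals k j)) * s ^ j) \<le> (k * s) ^ j"
    using assms card_prime_pals_le[of k]
    by (auto simp: power_mult_distrib intro!: mult_right_mono simp flip: of_nat_power)
qed

lemma prime_pal_gf_upper:
  assumes s: "0 \<le> s" "k * s < 1"
  shows "prime_pal_gf k s \<le> k * s + (real k - 1) * k * s\<^sup>2 / (1 - k * s)"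
proof -
  let ?F = "\<lambda>j. real (card (prime_pals k j)) * s ^ j"
  have geo: "(\<lambda>j. (real k - 1) * k * s\<^sup>2 * (k * s) ^ j) sums ((real k - 1) * k * s\<^sup>2 / (1 - k * s))"
    using s sums_mult[OF geometric_sums[of "k * s"], of "(real k - 1) * k * s\<^sup>2"] by simp
  have "?F (j + 2) \<le> (real k - 1) * k * s\<^sup>2 * (k * s) ^ j" for j
  proof -
    have "card (prime_pals k (j + 2)) + k ^ (j + 1) \<le> k ^ (j + 2)"
      using card_prime_pals_upper[of "j + 2" k] by simp
    then have "real (card (prime_pals k (j + 2))) \<le> real k ^ (j + 2) - real k ^ (j + 1)"
      by (metis of_nat_add of_nat_le_iff of_nat_power le_diff_eq)
    also have "\<dots> = (real k - 1) * k * k ^ j" by (simp add: algebra_simps)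
    finally have "?F (j + 2) \<le> ((real k - 1) * k * k ^ j) * s ^ (j + 2)"
      using s by (intro mult_right_mono) simp_all
    also have "\<dots> = (real k - 1) * k * s\<^sup>2 * (k * s) ^ j"
      by (simp add: power_add power_mult_distrib power2_eq_square)
    finally show ?thesis .
  qed
  then have "(\<Sum>j. ?F (j + 2)) \<le> (real k - 1) * k * s\<^sup>2 / (1 - k * s)"
    using summable_ignore_initial_segment[OF summable_prime_pal_gf[OF s], of 2] geo
    by (intro sums_le[OF _ summable_sums]) simp_all
  moreover have "prime_pal_gf k s = (\<Sum>j. ?F (j + 2)) + ?F 1"
    using suminf_split_initial_segment[OF summable_prime_pal_gf[OF s], of 2]
    by (simp add: prime_pal_gf_def numeral_2_eq_2 prime_pals_0)
  moreover have "?F 1 \<le> k * s"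
    using card_prime_pals_le[of k 1] s by (simp add: mult_right_mono)
  ultimately show ?thesis by linarith
qed

lemma pal_prefix_bound_gf:
  fixes s :: real
  assumes k: "2 \<le> k" and s: "0 \<le> s" "k * s < 1"
  shows "(\<lambda>j. real (pal_prefix_bound k j) * s ^ j) sums (k * s\<^sup>2 / ((1 - k * s) * (1 - k * s\<^sup>2)))"
proof -
  let ?P = "\<lambda>j. real (pal_prefix_bound k j) * s ^ j"
  have "summable ?P"
  proof (rule summable_comparison_test)
    show "summable (\<lambda>j. (k * s) ^ j)" using s by simp
    show "\<exists>N. \<forall>j\<ge>N. norm (?P j) \<le> (k * s) ^ j"
      using s pal_prefix_bound_le[OF k]
      by (auto simp: power_mult_distrib intro!: mult_right_mono simp flip: of_nat_power)
  qed
  then obtain C where C: "?P sums C" by (auto simp: summable_def)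
  have shift: "(\<lambda>j. ?P (j + 2)) = (\<lambda>j. k * s\<^sup>2 * (k * s) ^ j + k * s\<^sup>2 * ?P j)"
    using pal_prefix_bound_Suc_Suc[of k]
    by (simp add: fun_eq_iff power_add power_mult_distrib power2_eq_square algebra_simps)
  have "(\<lambda>j. ?P (j + 2)) sums C"
  proof -
    have "(\<Sum>j<2. ?P j) = 0" by (simp add: numeral_2_eq_2 pal_prefix_bound_def)
    then show ?thesis using C sums_iff_shift[of ?P 2 C] by simp
  qed
  moreover have "(\<lambda>j. k * s\<^sup>2 * (k * s) ^ j + k * s\<^sup>2 * ?P j) sums (k * s\<^sup>2 / (1 - k * s) + k * s\<^sup>2 * C)"
    using s sums_mult[OF geometric_sums[of "k * s"], of "k * s\<^sup>2"] sums_mult[OF C, of "k * s\<^sup>2"]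
    by (intro sums_add) simp_all
  ultimately have "C = k * s\<^sup>2 / (1 - k * s) + k * s\<^sup>2 * C"
    unfolding shift by (rule sums_unique2)
  then have "C * (1 - k * s\<^sup>2) = k * s\<^sup>2 / (1 - k * s)" by (simp add: algebra_simps)
  moreover have "k * s\<^sup>2 < 1"
  proof -
    have "s \<le> k * s" using mult_right_mono[of 1 "real k" s] k s by simp
    then have "s \<le> 1" using s by simp
    then have "k * s\<^sup>2 \<le> k * s"
      using s by (simp add: power2_eq_square mult_left_mono mult_left_le)
    then show ?thesis using s by simp
  qed
  ultimately have "C = k * s\<^sup>2 / ((1 - k * s) * (1 - k * s\<^sup>2))"
    using s by (simp add: eq_divide_eq mult_ac)
  with C show ?thesis by simp
qed

lemma prime_pal_gf_lower:
  fixes s :: real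
  assumes k: "2 \<le> k" and s: "0 \<le> s" "k * s < 1"
  shows "k * s / (1 - k * s) - k * s\<^sup>2 / ((1 - k * s) * (1 - k * s\<^sup>2)) \<le> prime_pal_gf k s"
proof -
  let ?F = "\<lambda>j. real (card (prime_pals k j)) * s ^ j"
  let ?P = "\<lambda>j. real (pal_prefix_bound k j) * s ^ j"
  have "?F sums prime_pal_gf k s"
    using summable_sums[OF summable_prime_pal_gf[OF s]] by (simp add: prime_pal_gf_def)
  then have F: "(\<lambda>j. ?F (Suc j)) sums prime_pal_gf k s"
    by (subst sums_Suc_iff) (simp add: prime_pals_0)
  have lower: "(\<lambda>j. (k * s) ^ Suc j - ?P (Suc j)) sums
      (k * s / (1 - k * s) - k * s\<^sup>2 / ((1 - k * s) * (1 - k * s\<^sup>2)))"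
  proof (intro sums_diff)
    have "1 / (1 - k * s) = k * s / (1 - k * s) + (k * s) ^ 0" using s by (simp add: field_simps)
    then have "(\<lambda>j. (k * s) ^ j) sums (k * s / (1 - k * s) + (k * s) ^ 0)"
      using s geometric_sums[of "k * s"] by simp
    then show "(\<lambda>j. (k * s) ^ Suc j) sums (k * s / (1 - k * s))"
      using sums_Suc_iff[of "\<lambda>j. (k * s) ^ j"] by blast
    show "(\<lambda>j. ?P (Suc j)) sums (k * s\<^sup>2 / ((1 - k * s) * (1 - k * s\<^sup>2)))"
      using pal_prefix_bound_gf[OF assms] sums_Suc_iff[of ?P] by (simp add: pal_prefix_bound_0)
  qed
  have termwise: "(k * s) ^ Suc j - ?P (Suc j) \<le> ?F (Suc j)" for j
  proof -
    have "real (k ^ Suc j) \<le> real (card (prime_pals k (Suc j))) + real (pal_prefix_bound k (Suc j))"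
      using card_prime_pals_lower[of "Suc j" k] by (metis le_add1 of_nat_add of_nat_le_iff plus_1_eq_Suc)
    then have "real k ^ Suc j - real (pal_prefix_bound k (Suc j)) \<le> real (card (prime_pals k (Suc j)))"
      by simp
    then have "(real k ^ Suc j - real (pal_prefix_bound k (Suc j))) * s ^ Suc j
        \<le> real (card (prime_pals k (Suc j))) * s ^ Suc j"
      using s by (intro mult_right_mono) simp_all
    then show ?thesis by (simp only: power_mult_distrib left_diff_distrib)
  qed
  show ?thesis by (rule sums_le[OF termwise lower F])
qed

lemma upper_gf_estimate_lt_1:
  fixes x s :: real
  assumes x: "2 \<le> x" and s_def: "s = 1 / (2 * x - 1/2)"
  shows "x * s + (x - 1) * x * s\<^sup>2 / (1 - x * s) < 1"
proof -
  have "0 < s" and s: "s * (2 * x - 1/2) = 1" using x unfolding s_def by auto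
  have "1 - x * s = (x - 1/2) * s" using s by (simp add: algebra_simps)
  then have "(x - 1) * x * s\<^sup>2 / (1 - x * s) = (x - 1) * x * s / (x - 1/2)"
    using \<open>0 < s\<close> by (simp add: power2_eq_square)
  also have "\<dots> < (x - 1/2) * s"
  proof -
    have "(x - 1) * x < (x - 1/2) * (x - 1/2)" by (simp add: algebra_simps)
    then show ?thesis using \<open>0 < s\<close> x by (simp add: pos_divide_less_eq)
  qed
  finally show ?thesis using s by (simp add: algebra_simps)
qed

lemma lower_gf_estimate_gt_1:
  fixes x s :: real
  assumes x: "2 \<le> x" and s_def: "s = 1 / (2 * x - 1)"
  shows "1 < x * s / (1 - x * s) - x * s\<^sup>2 / ((1 - x * s) * (1 - x * s\<^sup>2))"
proof -
  have "0 < s" and s: "s * (2 * x - 1) = 1" using x unfolding s_def by auto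
  have xs: "1 - x * s = (x - 1) * s" using s by (simp add: algebra_simps)
  have "x * s + x * s\<^sup>2 < 1"
  proof -
    have "0 \<le> x * (x - 2)" using x by simp
    then have "x * (2 * x - 1) + x < (2 * x - 1)\<^sup>2" by (simp add: power2_eq_square algebra_simps)
    then have "(x * (2 * x - 1) + x) * s\<^sup>2 < ((2 * x - 1) * s)\<^sup>2"
      using \<open>0 < s\<close> by (simp add: power_mult_distrib)
    also have "\<dots> = 1" using s by (simp add: mult.commute)
    finally have "(x * (2 * x - 1) + x) * s\<^sup>2 < 1" .
    moreover have "x * s + x * s\<^sup>2 = x * s * (s * (2 * x - 1)) + x * s\<^sup>2" using s by simp
    moreover have "\<dots> = (x * (2 * x - 1) + x) * s\<^sup>2" by (simp add: power2_eq_square algebra_simps)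
    ultimately show ?thesis by simp
  qed
  moreover have "0 < x * s" using \<open>0 < s\<close> x by simp
  ultimately have q: "x * s / (1 - x * s\<^sup>2) < 1" by (simp add: pos_divide_less_eq)
  have "x * s / (1 - x * s) = x / (x - 1)" unfolding xs using \<open>0 < s\<close> by simp
  moreover have "x * s\<^sup>2 / ((1 - x * s) * (1 - x * s\<^sup>2)) = (x * s / (1 - x * s\<^sup>2)) / (x - 1)"
    unfolding xs using \<open>0 < s\<close> by (simp add: power2_eq_square)
  ultimately have "x * s / (1 - x * s) - x * s\<^sup>2 / ((1 - x * s) * (1 - x * s\<^sup>2))
      = (x - x * s / (1 - x * s\<^sup>2)) / (x - 1)"
    by (simp add: diff_divide_distrib)
  also have "\<dots> > 1" using q x by simp
  finally show ?thesis .
qed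

lemma prime_pal_gf_root:
  assumes k: "2 \<le> k"
  obtains \<alpha> where "2 * real k - 1 < \<alpha>" "\<alpha> < 2 * real k - 1/2" "prime_pal_gf k (1 / \<alpha>) = 1"
proof -
  define s1 where "s1 = 1 / (2 * real k - 1/2)"
  define s2 where "s2 = 1 / (2 * real k - 1)"
  define K where "K = 1 / (real k + 1/2)"
  have kr: "2 \<le> real k" using k by simp
  have s: "0 < s1" "s1 < s2" "s2 < K" "real k * K < 1"
    using kr unfolding s1_def s2_def K_def by (simp_all add: field_simps)
  have "real k * s2 < real k * K" using s kr by (intro mult_strict_left_mono) auto
  moreover have "real k * s1 < real k * s2" using s kr by (intro mult_strict_left_mono) auto
  ultimately have "k * s1 < 1" "k * s2 < 1" using s by auto
  then have below: "prime_pal_gf k s1 < 1" and above: "1 < prime_pal_gf k s2"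
    using prime_pal_gf_upper[of s1 k] upper_gf_estimate_lt_1[OF kr s1_def]
      prime_pal_gf_lower[OF k, of s2] lower_gf_estimate_gt_1[OF kr s2_def] s
    by linarith+
  have "continuous_on {s1..s2} (prime_pal_gf k)"
  proof (intro continuous_at_imp_continuous_on ballI)
    fix x assume "x \<in> {s1..s2}"
    then have "norm x < norm K" using s by auto
    moreover have "summable (\<lambda>j. real (card (prime_pals k j)) * K ^ j)"
      using s by (intro summable_prime_pal_gf) simp_all
    ultimately show "isCont (prime_pal_gf k) x"
      unfolding prime_pal_gf_def[abs_def] by (rule isCont_powser[rotated])
  qed
  then obtain s where "s1 \<le> s" "s \<le> s2" and root: "prime_pal_gf k s = 1"
    using IVT'[of "prime_pal_gf k" s1 1 s2] below above s by auto
  with below above have "s1 < s" "s < s2" by (auto simp: order.order_iff_strict)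
  then have "2 * real k - 1 < 1 / s" "1 / s < 2 * real k - 1/2"
    using s kr unfolding s1_def s2_def by (simp_all add: field_simps)
  with root show thesis by (intro that[of "1 / s"]) simp_all
qed

section \<open>Renewal sequences\<close>

lemma renewal_le_initial:
  fixes u \<phi> :: "nat \<Rightarrow> real"
  assumes renewal: "\<And>n. 1 \<le> n \<Longrightarrow> u n = (\<Sum>j=1..n. \<phi> j * u (n - j))"
    and \<phi>_nonneg: "\<And>j. 0 \<le> \<phi> j" and \<phi>_le_1: "\<And>n. (\<Sum>j=1..n. \<phi> j) \<le> 1"
    and "0 \<le> u 0"
  shows "u n \<le> u 0"
proof (induction n rule: less_induct)
  case (less n)
  show ?case
  proof (cases "n = 0")
    case False
    then have "u n = (\<Sum>j=1..n. \<phi> j * u (n - j))" using renewal by simp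
    also have "\<dots> \<le> (\<Sum>j=1..n. \<phi> j * u 0)"
      using less \<phi>_nonneg by (intro sum_mono mult_left_mono) auto
    also have "\<dots> = (\<Sum>j=1..n. \<phi> j) * u 0" by (rule sum_distrib_right[symmetric])
    also have "\<dots> \<le> 1 * u 0" using \<phi>_le_1[of n] \<open>0 \<le> u 0\<close> by (rule mult_right_mono)
    finally show ?thesis by simp
  qed simp
qed

text \<open>If the defects \<open>1 - (\<Sum>j=1..n. \<phi> j)\<close> are summable, the running minima of \<open>u\<close>
  decrease at most by the factors \<open>1 - defect\<close>, whose product stays bounded away from \<open>0\<close>.\<close>
lemma renewal_bounded_below:
  fixes u \<phi> :: "nat \<Rightarrow> real"
  assumes renewal: "\<And>n. 1 \<le> n \<Longrightarrow> u n = (\<Sum>j=1..n. \<phi> j * u (n - j))"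
    and \<phi>_nonneg: "\<And>j. 0 \<le> \<phi> j" and \<phi>_le_1: "\<And>n. (\<Sum>j=1..n. \<phi> j) \<le> 1"
    and defect_summable: "summable (\<lambda>n. 1 - (\<Sum>j=1..n. \<phi> j))"
    and u_pos: "\<And>n. 0 < u n"
  obtains c where "0 < c" "\<And>n. c \<le> u n"
proof -
  define e where "e n = 1 - (\<Sum>j=1..n. \<phi> j)" for n
  define m where "m n = Min (u ` {..n})" for n
  have e: "0 \<le> e n" "e n \<le> 1" for n
    unfolding e_def using \<phi>_le_1[of n] \<phi>_nonneg by (auto intro: sum_nonneg)
  have m_le: "m n \<le> u i" if "i \<le> n" for i n
    unfolding m_def using that by (intro Min_le) auto
  have m_pos: "0 < m n" for n
    unfolding m_def using u_pos by (subst Min_gr_iff) auto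
  have m_step: "(1 - e (Suc n)) * m n \<le> m (Suc n)" for n
  proof -
    have "(1 - e (Suc n)) * m n = (\<Sum>j=1..Suc n. \<phi> j) * m n" unfolding e_def by simp
    also have "\<dots> = (\<Sum>j=1..Suc n. \<phi> j * m n)" by (rule sum_distrib_right)
    also have "\<dots> \<le> (\<Sum>j=1..Suc n. \<phi> j * u (Suc n - j))"
      using \<phi>_nonneg by (intro sum_mono mult_left_mono m_le) auto
    also have "\<dots> = u (Suc n)" using renewal by simp
    finally have "(1 - e (Suc n)) * m n \<le> u (Suc n)" .
    moreover have "(1 - e (Suc n)) * m n \<le> m n" using e m_pos[of n] by (simp add: mult_le_cancel_right1)
    moreover have "u ` {..Suc n} = insert (u (Suc n)) (u ` {..n})" by (auto simp: atMost_Suc)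
    ultimately show ?thesis unfolding m_def by (simp add: Min_insert)
  qed
  have e_summable: "summable e" using defect_summable unfolding e_def .
  obtain N where N: "\<And>n. N \<le> n \<Longrightarrow> norm (\<Sum>i. e (i + n)) < 1/2"
    using suminf_exist_split[OF _ e_summable, of "1/2"] by auto
  have "norm (\<Sum>i. e (i + Suc N)) < 1/2" by (rule N) simp
  then have tail: "(\<Sum>i. e (i + Suc N)) < 1/2" by (simp add: abs_less_iff)
  have partial: "(\<Sum>i<d. e (i + Suc N)) \<le> 1/2" for d
    using sum_le_suminf[OF summable_ignore_initial_segment[OF e_summable, of "Suc N"], of "{..<d}"] e tail
    by simp
  have decay: "m N * (1 - (\<Sum>i<d. e (i + Suc N))) \<le> m (N + d)" for d
  proof (induction d)
    case (Suc d)
    let ?S = "\<Sum>i<d. e (i + Suc N)" and ?e = "e (Suc (N + d))"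
    have "0 \<le> m N * (?e * ?S)"
      using m_pos[of N] e by (intro mult_nonneg_nonneg sum_nonneg) (auto simp: less_imp_le)
    then have "m N * (1 - (\<Sum>i<Suc d. e (i + Suc N))) \<le> (1 - ?e) * (m N * (1 - ?S))"
      by (simp add: algebra_simps)
    also have "\<dots> \<le> (1 - ?e) * m (N + d)" using Suc e by (intro mult_left_mono) auto
    also have "\<dots> \<le> m (N + Suc d)" using m_step[of "N + d"] by simp
    finally show ?case .
  qed simp
  show thesis
  proof (rule that)
    show "0 < m N / 2" using m_pos by simp
    show "m N / 2 \<le> u n" for n
    proof (cases "n \<le> N")
      case True
      then show ?thesis using m_le[OF True] m_pos[of N] by simp
    next
      case False
      then obtain d where n: "n = N + d" by (metis le_add_diff_inverse nat_le_linear)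
      have "m N * (\<Sum>i<d. e (i + Suc N)) \<le> m N * (1/2)"
        using partial[of d] m_pos[of N] by (intro mult_left_mono) auto
      then have "m N / 2 \<le> m N * (1 - (\<Sum>i<d. e (i + Suc N)))" by (simp add: algebra_simps)
      also have "\<dots> \<le> u n" using decay[of d] m_le[of n n] n by simp
      finally show ?thesis .
    qed
  qed
qed

lemma summable_defect_if_geometric:
  fixes \<phi> :: "nat \<Rightarrow> real"
  assumes sums: "\<phi> sums 1" and "\<phi> 0 = 0" and nonneg: "\<And>j. 0 \<le> \<phi> j"
    and geometric: "\<And>j. \<phi> j \<le> r ^ j" and "r < 1"
  shows "summable (\<lambda>n. 1 - (\<Sum>j=1..n. \<phi> j))"
proof (rule summable_comparison_test)
  have "0 \<le> r" using nonneg[of 1] geometric[of 1] by simp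
  then show "summable (\<lambda>n. r ^ Suc n / (1 - r))"
    using \<open>r < 1\<close> by (intro summable_divide) simp
  have "1 - (\<Sum>j=1..n. \<phi> j) \<le> r ^ Suc n / (1 - r)" for n
  proof -
    have "{..<Suc n} = insert 0 {1..n}" by auto
    then have "1 - (\<Sum>j=1..n. \<phi> j) = (\<Sum>i. \<phi> (i + Suc n))"
      using sums_unique[OF sums_split_initial_segment[OF sums, of "Suc n"]] \<open>\<phi> 0 = 0\<close> by simp
    also have "\<dots> \<le> (\<Sum>i. r ^ Suc n * r ^ i)"
    proof (rule suminf_le)
      show "\<phi> (i + Suc n) \<le> r ^ Suc n * r ^ i" for i
        using geometric[of "i + Suc n"] by (simp add: power_add mult_ac)
      show "summable (\<lambda>i. \<phi> (i + Suc n))"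
        using sums_summable[OF sums] by (rule summable_ignore_initial_segment)
      show "summable (\<lambda>i. r ^ Suc n * r ^ i)" using \<open>0 \<le> r\<close> \<open>r < 1\<close> by (intro summable_mult) simp
    qed
    also have "\<dots> = r ^ Suc n / (1 - r)"
      using \<open>0 \<le> r\<close> \<open>r < 1\<close> suminf_mult[of "\<lambda>i. r ^ i" "r ^ Suc n"] suminf_geometric[of r] by simp
    finally show ?thesis .
  qed
  moreover have "0 \<le> 1 - (\<Sum>j=1..n. \<phi> j)" for n
    using sum_le_suminf[OF sums_summable[OF sums], of "{1..n}"] nonneg sums_unique[OF sums] by simp
  ultimately show "\<exists>N. \<forall>n\<ge>N. norm (1 - (\<Sum>j=1..n. \<phi> j)) \<le> r ^ Suc n / (1 - r)" by simp
qed


section \<open>Exponential growth of palstars\<close>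

lemma palstar_count_bigtheta:
  assumes k: "0 < k" "real k < \<alpha>" and root: "prime_pal_gf k (1 / \<alpha>) = 1"
  shows "(\<lambda>n. real (palstar_count k n)) \<in> \<Theta>(\<lambda>n. \<alpha> ^ n)"
proof -
  define s where "s = 1 / \<alpha>"
  have s: "0 < s" "k * s < 1" using k unfolding s_def by (simp_all add: field_simps)
  define u where "u n = real (card (palstars k n)) * s ^ n" for n
  define \<phi> where "\<phi> j = real (card (prime_pals k j)) * s ^ j" for j
  have \<phi>_sums: "\<phi> sums 1"
    using summable_sums[OF summable_prime_pal_gf[of s k]] s root
    by (simp add: \<phi>_def[abs_def] prime_pal_gf_def s_def)
  have \<phi>_nonneg: "0 \<le> \<phi> j" for j using s by (simp add: \<phi>_def)
  have \<phi>_geometric: "\<phi> j \<le> (k * s) ^ j" for j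
    using card_prime_pals_le[of k j] s
    by (simp add: \<phi>_def power_mult_distrib mult_right_mono flip: of_nat_power)
  have renewal: "u n = (\<Sum>j=1..n. \<phi> j * u (n - j))" if "1 \<le> n" for n
  proof -
    have "u n = (\<Sum>j=1..n. real (card (prime_pals k j)) * real (card (palstars k (n - j))) * s ^ n)"
      unfolding u_def card_palstars_renewal[OF that] by (simp add: sum_distrib_right)
    also have "\<dots> = (\<Sum>j=1..n. \<phi> j * u (n - j))"
      by (intro sum.cong) (auto simp: \<phi>_def u_def power_add[symmetric])
    finally show ?thesis .
  qed
  have \<phi>_le_1: "(\<Sum>j=1..n. \<phi> j) \<le> 1" for n
    using sum_le_suminf[OF sums_summable[OF \<phi>_sums], of "{1..n}"] \<phi>_nonneg sums_unique[OF \<phi>_sums]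
    by simp
  have u_pos: "0 < u n" for n
    using palstars_nonempty[OF k(1)] s by (simp add: u_def card_gt_0_iff palstars_def finite_words)
  have u_0: "u 0 = 1" by (simp add: u_def palstars_0)
  obtain c where c: "0 < c" "\<And>n. c \<le> u n"
    using renewal_bounded_below[OF renewal \<phi>_nonneg \<phi>_le_1 _ u_pos]
      summable_defect_if_geometric[OF \<phi>_sums _ \<phi>_nonneg \<phi>_geometric] s
    by (auto simp: \<phi>_def prime_pals_0)
  have u_le_1: "u n \<le> 1" for n
    using renewal_le_initial[OF renewal \<phi>_nonneg \<phi>_le_1] u_0 by simp
  have "c * norm (\<alpha> ^ n) \<le> norm (real (palstar_count k n))
      \<and> norm (real (palstar_count k n)) \<le> 1 * norm (\<alpha> ^ n)" for n
  proof -
    have pos: "0 < \<alpha> ^ n" using k by simp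
    have count: "real (palstar_count k n) = u n * \<alpha> ^ n"
      using k by (simp add: u_def s_def palstar_count_eq_card power_one_over)
    have "c * \<alpha> ^ n \<le> u n * \<alpha> ^ n" using c pos by (intro mult_right_mono) auto
    moreover have "u n * \<alpha> ^ n \<le> 1 * \<alpha> ^ n" using u_le_1 pos by (intro mult_right_mono) auto
    ultimately show ?thesis using count pos by (simp add: abs_of_pos)
  qed
  then show ?thesis by (intro bigthetaI'[of c 1] always_eventually allI) (simp_all add: c)
qed

theorem theorem3:
  fixes k :: nat
  assumes "k \<ge> 2"
  shows "\<exists>\<alpha>::real. 2 * real k - 1 < \<alpha> \<and> \<alpha> < 2 * real k - 1/2 \<and>
           (\<lambda>n. real (palstar_count k n)) \<in> \<Theta>(\<lambda>n. \<alpha> ^ n)"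
proof -
  obtain \<alpha> where \<alpha>: "2 * real k - 1 < \<alpha>" "\<alpha> < 2 * real k - 1/2" "prime_pal_gf k (1 / \<alpha>) = 1"
    using prime_pal_gf_root[OF assms] .
  moreover have "real k < \<alpha>" using \<alpha>(1) assms by simp
  then have "(\<lambda>n. real (palstar_count k n)) \<in> \<Theta>(\<lambda>n. \<alpha> ^ n)"
    using palstar_count_bigtheta \<alpha>(3) assms by simp
  ultimately show ?thesis by blast
qed

end
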